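(* Let $n\in\mathbb{N}$, $n\geq 2$, let $l\in(0,\frac{2}{n})$ and let $\alpha$ satisfy $\frac{2}{n}\leq\alpha<1+\frac{1}{n}-\frac{l}{2}$. Then there exist $\theta$ with $1<\theta<\frac{n}{n-2}$ and $\mu>\frac{n}{2}$ such that $$\frac{l(2\mu-1)}{4\mu-n}<\frac{n(\theta+1-2\alpha\theta)+2\theta}{2n\theta+n^2-n^2\theta}.$$
   Context: For $n=2$ the condition $1<\theta<\frac{n}{n-2}$ is understood as $\theta>1$. *)

theory Defs
  imports Complex_Main
begin

end

theory Submission
  imports Defs
begin

(* At \<theta> = 1 the right-hand side equals 1 - \<alpha> + 1/n, which exceeds l/2 by hypothesis, while the
   left-hand side tends to l/2 as \<mu> \<rightarrow> \<infinity>. By continuity, any \<theta> slightly above 1 together with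
   any sufficiently large \<mu> satisfies the inequality. *)

lemma exists_lt_of_tendsto_lt:
  fixes f :: "'a \<Rightarrow> 'c::{linorder_topology, dense_linorder}" and g :: "'b \<Rightarrow> 'c"
  assumes "(f \<longlongrightarrow> a) F" and "(g \<longlongrightarrow> b) G" and "b < a"
    and "F \<noteq> bot" and "G \<noteq> bot"
    and "eventually P F" and "eventually Q G"
  shows "\<exists>x y. P x \<and> Q y \<and> g y < f x"
proof -
  obtain m where "b < m" "m < a" using \<open>b < a\<close> dense by blast
  have "eventually (\<lambda>x. P x \<and> m < f x) F"
    using assms(1,6) \<open>m < a\<close> by (auto intro: eventually_conj order_tendstoD)
  then obtain x where "P x" "m < f x" using \<open>F \<noteq> bot\<close> eventually_happens by blast
  have "eventually (\<lambda>y. Q y \<and> g y < m) G"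
    using assms(2,7) \<open>b < m\<close> by (auto intro: eventually_conj order_tendstoD)
  then obtain y where "Q y" "g y < m" using \<open>G \<noteq> bot\<close> eventually_happens by blast
  show ?thesis using \<open>P x\<close> \<open>Q y\<close> \<open>g y < m\<close> \<open>m < f x\<close> by force
qed

lemma tendsto_linear_fraction_at_top:
  fixes l n :: real
  shows "((\<lambda>\<mu>. l * (2 * \<mu> - 1) / (4 * \<mu> - n)) \<longlongrightarrow> l / 2) at_top"
proof -
  have "((\<lambda>\<mu>. l * (2 - inverse \<mu>) / (4 - n * inverse \<mu>)) \<longlongrightarrow> l * (2 - 0) / (4 - n * 0)) at_top"
    by (intro tendsto_intros tendsto_inverse_0_at_top filterlim_ident) simp
  moreover have "eventually (\<lambda>\<mu>. l * (2 - inverse \<mu>) / (4 - n * inverse \<mu>) = l * (2 * \<mu> - 1) / (4 * \<mu> - n)) at_top"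
    using eventually_gt_at_top[of 0]
  proof eventually_elim
    case (elim \<mu>)
    then have "\<mu> * (l * (2 - inverse \<mu>)) = l * (2 * \<mu> - 1)" "\<mu> * (4 - n * inverse \<mu>) = 4 * \<mu> - n"
      by (simp_all add: field_simps)
    with elim show ?case
      by (metis less_irrefl mult_divide_mult_cancel_left)
  qed
  ultimately show ?thesis
    by (simp add: tendsto_cong)
qed

lemma tendsto_linear_fraction_at_right_1:
  fixes n \<alpha> :: real
  assumes "n \<noteq> 0"
  shows "((\<lambda>\<theta>. (n * (\<theta> + 1 - 2 * \<alpha> * \<theta>) + 2 * \<theta>) / (2 * n * \<theta> + n\<^sup>2 - n\<^sup>2 * \<theta>))
           \<longlongrightarrow> 1 - \<alpha> + 1 / n) (at_right 1)"
proof -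
  let ?R = "\<lambda>\<theta>. (n * (\<theta> + 1 - 2 * \<alpha> * \<theta>) + 2 * \<theta>) / (2 * n * \<theta> + n\<^sup>2 - n\<^sup>2 * \<theta>)"
  have "(?R \<longlongrightarrow> ?R 1) (at_right 1)"
    using assms by (intro tendsto_intros) (auto simp: power2_eq_square)
  moreover have "?R 1 = 1 - \<alpha> + 1 / n"
    using assms by (simp add: field_simps power2_eq_square)
  ultimately show ?thesis
    by simp
qed

lemma eventually_at_right_1_below_critical_exponent:
  fixes n :: nat
  assumes "n \<ge> 2"
  shows "eventually (\<lambda>\<theta>::real. 1 < \<theta> \<and> (n = 2 \<or> \<theta> < real n / (real n - 2))) (at_right 1)"
proof (cases "n = 2")
  case True
  then show ?thesis using eventually_at_right_less by simp
next
  case False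
  then have "1 < real n / (real n - 2)" using assms by (simp add: field_simps)
  then show ?thesis
    unfolding eventually_at_right_field by (intro exI[of _ "real n / (real n - 2)"]) auto
qed

theorem lemma4p4:
  fixes n :: nat and l \<alpha> :: real
  assumes "n \<ge> 2"
    and "0 < l" and "l < 2 / real n"
    and "2 / real n \<le> \<alpha>" and "\<alpha> < 1 + 1 / real n - l / 2"
  shows "\<exists>\<theta> \<mu> :: real. 1 < \<theta> \<and> (n = 2 \<or> \<theta> < real n / (real n - 2)) \<and> \<mu> > real n / 2 \<and>
    l * (2 * \<mu> - 1) / (4 * \<mu> - real n) <
      (real n * (\<theta> + 1 - 2 * \<alpha> * \<theta>) + 2 * \<theta>) / (2 * real n * \<theta> + (real n)^2 - (real n)^2 * \<theta>)"
proof -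
  have "real n \<noteq> 0" using assms(1) by simp
  then have rhs: "((\<lambda>\<theta>. (real n * (\<theta> + 1 - 2 * \<alpha> * \<theta>) + 2 * \<theta>) /
      (2 * real n * \<theta> + (real n)^2 - (real n)^2 * \<theta>)) \<longlongrightarrow> 1 - \<alpha> + 1 / real n) (at_right 1)"
    by (rule tendsto_linear_fraction_at_right_1)
  have "l / 2 < 1 - \<alpha> + 1 / real n" using assms(5) by simp
  from exists_lt_of_tendsto_lt[OF rhs tendsto_linear_fraction_at_top this
      trivial_limit_at_right_real trivial_limit_at_top_linorder
      eventually_at_right_1_below_critical_exponent[OF assms(1)] eventually_gt_at_top]
  show ?thesis by blast
qed

end
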